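(* Fix a positive integer $s$, let $h_{s,i,j}$ be as in the context, and set $\mathcal{H}(s)=\sum_{i\ge 0}\sum_{j\ge i+1}h_{s,i,j}x^jz^i$. Then $$\mathcal{H}(s)=-\frac{(1-xz)^s}{1-z}-\frac{x(1-xz)^{2s}}{(1-x)^{s+1}}+\frac{(1-xz)^{2s}}{(1-x)^s(1-z)}.$$
   Context: For a fixed positive integer $s$, the numbers $h_{s,i,j}$ (integers $i\ge 0$, $j$) are defined recursively by: $h_{s,i,j}=0$ if $j\le i$; for $i=0$ and $j\ge 1$, $h_{s,0,j}=\binom{s+j-1}{j}\frac{s-j}{s}$; for $i>0$ and $j>i$, $h_{s,i,j}=-\frac{s-j+1}{i}h_{s,i-1,j-1}-\frac{j-i}{i}h_{s,i-1,j}$. The identity is of formal power series in $x,z$. *)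

theory Defs
  imports "HOL-Computational_Algebra.Formal_Power_Series"
begin

text \<open>The numbers h(s,i,j). h(s,i,j) = 0 for j <= i (only j >= 0 matters, since
  j <= i covers all negative j).\<close>
fun hnum :: "nat \<Rightarrow> nat \<Rightarrow> nat \<Rightarrow> rat" where
  "hnum s 0 j = (if j = 0 then 0
      else of_nat ((s + j - 1) choose j) * ((of_nat s - of_nat j) / of_nat s))"
| "hnum s (Suc i) j = (if j \<le> Suc i then 0
      else - ((of_nat s - of_nat j + 1) / of_nat (Suc i)) * hnum s i (j - 1)
           - ((of_nat j - of_nat (Suc i)) / of_nat (Suc i)) * hnum s i j)"

text \<open>Bivariate formal power series in x, z: power series in z whose
  coefficients are power series in x.\<close>
definition fpsX :: "rat fps fps" where "fpsX = fps_const fps_X"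
definition fpsZ :: "rat fps fps" where "fpsZ = fps_X"

definition Hser :: "nat \<Rightarrow> rat fps fps" where
  "Hser s = Abs_fps (\<lambda>i. Abs_fps (\<lambda>j. hnum s i j))"

end

theory Submission
  imports Defs
begin

text \<open>
  Let D = (1 - z) d/dz + x (1 - x) d/dx. Comparing coefficients of z^i x^j, the recurrence
  defining h says exactly that D H = (1 - s x) H. Since D is a derivation and 1 - x z, 1 - x,
  1 - z and x are eigenfunctions of D (with eigenvalues -x, -x, -1 and 1 - x), each of the three
  terms of the closed form is an eigenfunction with the same eigenvalue 1 - s x. Eigenfunctions
  of D for a common eigenvalue are determined by their coefficient of z^0, because the
  coefficient of z^i in D f is (i + 1) f_(i+1) plus terms involving only f_0, ..., f_i. At z = 0
  both sides equal (1 - x)^(-s) - x (1 - x)^(-s-1) - 1.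
\<close>

unbundle fps_syntax

definition fps_deriv_inner :: "'a::comm_ring_1 fps fps \<Rightarrow> 'a fps fps" where
  "fps_deriv_inner f = Abs_fps (\<lambda>i. fps_deriv (f $ i))"

lemma fps_deriv_inner_nth [simp]: "fps_deriv_inner f $ i = fps_deriv (f $ i)"
  by (simp add: fps_deriv_inner_def)

lemma fps_deriv_inner_add: "fps_deriv_inner (f + g) = fps_deriv_inner f + fps_deriv_inner g"
  by (simp add: fps_eq_iff)

lemma fps_deriv_inner_diff: "fps_deriv_inner (f - g) = fps_deriv_inner f - fps_deriv_inner g"
  by (simp add: fps_eq_iff)

lemma fps_deriv_inner_mult:
  "fps_deriv_inner (f * g) = f * fps_deriv_inner g + fps_deriv_inner f * g"
  by (simp add: fps_eq_iff fps_mult_nth fps_deriv_sum sum.distrib)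

lemma fps_deriv_inner_fps_const [simp]:
  "fps_deriv_inner (fps_const c) = fps_const (fps_deriv c)"
  by (simp add: fps_eq_iff)

lemma fps_deriv_inner_fps_X [simp]: "fps_deriv_inner fps_X = 0"
  by (simp add: fps_eq_iff fps_X_def)

lemma fps_deriv_inner_one [simp]: "fps_deriv_inner 1 = 0"
  by (simp add: fps_eq_iff)

definition Der :: "'a::comm_ring_1 fps fps \<Rightarrow> 'a fps fps" where
  "Der f = (1 - fps_X) * fps_deriv f + fps_const (fps_X * (1 - fps_X)) * fps_deriv_inner f"

lemma Der_add: "Der (f + g) = Der f + Der g"
  by (simp add: Der_def fps_deriv_inner_add algebra_simps)

lemma Der_diff: "Der (f - g) = Der f - Der g"
  by (simp add: Der_def fps_deriv_inner_diff algebra_simps)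

lemma Der_uminus: "Der (- f) = - Der f"
  by (simp add: Der_def fps_eq_iff)

lemma Der_mult: "Der (f * g) = f * Der g + Der f * g"
  by (simp add: Der_def fps_deriv_inner_mult algebra_simps)

lemma Der_one [simp]: "Der 1 = 0"
  by (simp add: Der_def)

lemma Der_nth:
  "Der f $ i =
    of_nat (Suc i) * f $ Suc i - of_nat i * f $ i + fps_X * (1 - fps_X) * fps_deriv (f $ i)"
  by (cases i) (simp_all add: Der_def algebra_simps)

lemma Der_mult_eigen:
  assumes "Der f = a * f" and "Der g = b * g"
  shows "Der (f * g) = (a + b) * (f * g)"
  by (simp add: Der_mult assms algebra_simps)

lemma Der_power_eigen:
  assumes "Der f = a * f"
  shows "Der (f ^ n) = of_nat n * a * f ^ n"
  by (induction n) (simp_all add: Der_mult assms algebra_simps)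

lemma Der_inverse_eigen:
  assumes "Der f = a * f" and "f * g = 1"
  shows "Der g = - a * g"
proof -
  have "0 = Der (f * g)" using assms(2) by simp
  also have "\<dots> = f * (Der g + a * g)" by (simp add: Der_mult assms(1) algebra_simps)
  finally have "g * f * (Der g + a * g) = 0" by (simp add: mult.assoc)
  then show ?thesis using assms(2) by (simp add: mult.commute add_eq_0_iff)
qed

lemma fps_mult_inverse_eq_1:
  fixes f :: "'a::{ring_1,inverse} fps"
  assumes "f $ 0 * inverse (f $ 0) = 1"
  shows "f * inverse f = 1"
  using fps_right_inverse[OF assms] by (simp add: fps_inverse_def)

lemma Der_divide_eigen:
  fixes f g :: "'a::field fps fps"
  assumes "Der f = a * f" and "Der g = b * g" and "g $ 0 $ 0 \<noteq> 0"
  shows "Der (f / g) = (a - b) * (f / g)"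
proof -
  have "g * inverse g = 1"
    using assms(3) by (intro fps_mult_inverse_eq_1 inverse_mult_eq_1') simp
  with assms(2) have "Der (inverse g) = - b * inverse g"
    by (rule Der_inverse_eigen)
  from Der_mult_eigen[OF assms(1) this]
  have "Der (f * inverse g) = (a - b) * (f * inverse g)"
    by simp
  moreover have "g $ 0 \<noteq> 0"
    using assms(3) by auto
  ultimately show ?thesis
    by (simp add: fps_divide_unit)
qed

lemma Der_eigen_unique:
  fixes f g :: "'a::{idom,semiring_char_0} fps fps"
  assumes "Der f = c * f" and "Der g = c * g" and "f $ 0 = g $ 0"
  shows "f = g"
proof -
  have "\<forall>k \<le> i. (f - g) $ k = 0" for i
  proof (induction i)
    case 0
    show ?case using assms(3) by simp
  next
    case (Suc i)
    have "Der (f - g) = c * (f - g)"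
      by (simp add: Der_diff assms(1,2) algebra_simps)
    moreover have "(c * (f - g)) $ i = 0"
      using Suc.IH by (simp add: fps_mult_nth del: fps_sub_nth)
    ultimately have "Der (f - g) $ i = 0"
      by simp
    moreover have "(f - g) $ i = 0"
      using Suc.IH by blast
    ultimately have "of_nat (Suc i) * (f - g) $ Suc i = 0"
      unfolding Der_nth by simp
    then show ?case
      using Suc.IH le_Suc_eq by (auto simp del: of_nat_Suc)
  qed
  then have "(f - g) $ i = 0" for i
    by blast
  then show ?thesis
    by (simp add: fps_eq_iff)
qed

lemma Der_fpsX: "Der fpsX = (1 - fpsX) * fpsX"
proof -
  have "fps_const (fps_X * (1 - fps_X)) = (1 - fpsX) * fpsX"
    by (metis fpsX_def fps_const_1_eq_1 fps_const_sub fps_const_mult mult.commute)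
  then show ?thesis
    by (simp add: Der_def fpsX_def)
qed

lemma Der_fpsZ: "Der fpsZ = 1 - fpsZ"
  by (simp add: Der_def fpsZ_def)

lemma Der_one_minus_fpsX: "Der (1 - fpsX) = - fpsX * (1 - fpsX)"
  by (simp add: Der_diff Der_fpsX algebra_simps)

lemma Der_one_minus_fpsZ: "Der (1 - fpsZ) = - 1 * (1 - fpsZ)"
  by (simp add: Der_diff Der_fpsZ)

lemma Der_one_minus_fpsX_fpsZ: "Der (1 - fpsX * fpsZ) = - fpsX * (1 - fpsX * fpsZ)"
  by (simp add: Der_diff Der_mult Der_fpsX Der_fpsZ algebra_simps)

lemma hnum_eq_0: "j \<le> i \<Longrightarrow> hnum s i j = 0"
  by (cases i) auto

lemma hnum_recurrence:
  "of_nat (Suc i) * hnum s (Suc i) j = (of_nat i + 1 - of_nat j) * hnum s i j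
     - (if j = 0 then 0 else (of_nat s - of_nat j + 1) * hnum s i (j - 1))"
proof (cases "j \<le> Suc i")
  case True
  then consider "j \<le> i" | "j = Suc i" by linarith
  then show ?thesis
    using True by cases (simp_all add: hnum_eq_0)
next
  case False
  then show ?thesis
    by (simp add: field_simps del: of_nat_Suc) (simp add: algebra_simps)
qed

lemma fps_X_one_minus_X_deriv_nth:
  fixes g :: "'a::comm_ring_1 fps"
  shows "(fps_X * (1 - fps_X) * fps_deriv g) $ j =
    of_nat j * g $ j - (if j = 0 then 0 else of_nat (j - 1) * g $ (j - 1))"
proof -
  have "fps_X * (1 - fps_X) * fps_deriv g = fps_X * fps_deriv g - fps_X * (fps_X * fps_deriv g)"
    by (simp add: algebra_simps)
  then show ?thesis
    by (cases j) (simp_all add: algebra_simps split: nat.split)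
qed

lemma Der_Hser: "Der (Hser s) = (1 - of_nat s * fpsX) * Hser s"
proof (intro fps_ext)
  fix i j
  have row: "((1 - of_nat s * fpsX) * Hser s) $ i = (1 - of_nat s * fps_X) * Abs_fps (hnum s i)"
    by (simp add: fpsX_def Hser_def algebra_simps flip: fps_of_nat)
  show "Der (Hser s) $ i $ j = ((1 - of_nat s * fpsX) * Hser s) $ i $ j"
    unfolding row using hnum_recurrence[of i s j]
    by (cases j) (simp_all add: Der_nth Hser_def fps_X_one_minus_X_deriv_nth algebra_simps
                       flip: fps_of_nat del: hnum.simps)
qed

lemma hnum_0_Suc:
  assumes "s > 0"
  shows "hnum s 0 (Suc k) = of_nat ((s + k) choose Suc k) - of_nat ((s + k) choose k)"
proof -
  have "Suc k * ((s + k) choose Suc k) = s * ((s + k) choose k)"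
    using binomial_absorption[of k "s + k"] binomial_absorb_comp[of "s + k" k] by simp
  then have "of_nat (Suc k) * rat_of_nat ((s + k) choose Suc k)
      = of_nat s * of_nat ((s + k) choose k)"
    by (metis of_nat_mult)
  moreover have "s - 1 + Suc k = s + k"
    using assms by simp
  ultimately show ?thesis
    using assms by (simp add: field_simps)
qed

lemma inverse_one_minus_fps_X_power:
  "n > 0 \<Longrightarrow>
    inverse ((1 - fps_X) ^ n) = Abs_fps (\<lambda>k. of_nat ((n + k - 1) choose k) :: 'a::field_char_0)"
  using one_minus_const_fps_X_neg_power'[of n "1 :: 'a"] by simp

lemma Hser_nth_0:
  assumes "s > 0"
  shows "Hser s $ 0 = inverse ((1 - fps_X) ^ s) - fps_X * inverse ((1 - fps_X) ^ Suc s) - 1"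
proof (rule fps_ext)
  fix j
  show "Hser s $ 0 $ j = (inverse ((1 - fps_X) ^ s) - fps_X * inverse ((1 - fps_X) ^ Suc s) - 1) $ j"
    unfolding inverse_one_minus_fps_X_power[OF assms]
      inverse_one_minus_fps_X_power[OF zero_less_Suc]
    using assms by (cases j) (simp_all add: Hser_def hnum_0_Suc hnum_eq_0 del: hnum.simps)
qed

lemma fps_divide_nth_0_unit: "g $ 0 \<noteq> 0 \<Longrightarrow> (f / g) $ 0 = f $ 0 * inverse (g $ 0)"
  by (simp add: fps_divide_unit)

definition Hclosed :: "nat \<Rightarrow> rat fps fps" where
  "Hclosed s =
      - ((1 - fpsX * fpsZ) ^ s / (1 - fpsZ))
      - fpsX * (1 - fpsX * fpsZ) ^ (2 * s) / (1 - fpsX) ^ (s + 1)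
      + (1 - fpsX * fpsZ) ^ (2 * s) / ((1 - fpsX) ^ s * (1 - fpsZ))"

lemma Der_Hclosed: "Der (Hclosed s) = (1 - of_nat s * fpsX) * Hclosed s"
proof -
  note U = Der_one_minus_fpsX_fpsZ and W = Der_one_minus_fpsX and Y = Der_one_minus_fpsZ
  have nonzero: "(1 - fpsZ) $ 0 $ 0 \<noteq> 0" "((1 - fpsX) ^ n) $ 0 $ 0 \<noteq> 0"
    "((1 - fpsX) ^ n * (1 - fpsZ)) $ 0 $ 0 \<noteq> 0" for n
    by (simp_all add: fpsX_def fpsZ_def fps_power_zeroth)
  have eigenvalues: "of_nat s * - fpsX - - 1 = 1 - of_nat s * fpsX"
    "(1 - fpsX) + of_nat (2 * s) * - fpsX - of_nat (s + 1) * - fpsX = 1 - of_nat s * fpsX"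
    "of_nat (2 * s) * - fpsX - (of_nat s * - fpsX + - 1) = 1 - of_nat s * fpsX"
    by (simp_all add: algebra_simps)
  have "Der ((1 - fpsX * fpsZ) ^ s / (1 - fpsZ))
      = (1 - of_nat s * fpsX) * ((1 - fpsX * fpsZ) ^ s / (1 - fpsZ))"
    using Der_divide_eigen[OF Der_power_eigen[OF U, of s] Y nonzero(1)] unfolding eigenvalues .
  moreover have "Der (fpsX * (1 - fpsX * fpsZ) ^ (2 * s) / (1 - fpsX) ^ (s + 1))
      = (1 - of_nat s * fpsX) * (fpsX * (1 - fpsX * fpsZ) ^ (2 * s) / (1 - fpsX) ^ (s + 1))"
    using Der_divide_eigen[OF Der_mult_eigen[OF Der_fpsX Der_power_eigen[OF U, of "2 * s"]]
        Der_power_eigen[OF W, of "s + 1"] nonzero(2)]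
    unfolding eigenvalues .
  moreover have "Der ((1 - fpsX * fpsZ) ^ (2 * s) / ((1 - fpsX) ^ s * (1 - fpsZ)))
      = (1 - of_nat s * fpsX) * ((1 - fpsX * fpsZ) ^ (2 * s) / ((1 - fpsX) ^ s * (1 - fpsZ)))"
    using Der_divide_eigen[OF Der_power_eigen[OF U, of "2 * s"]
        Der_mult_eigen[OF Der_power_eigen[OF W, of s] Y]
        nonzero(3)]
    unfolding eigenvalues .
  moreover have "Der (- A - B + C) = e * (- A - B + C)"
    if "Der A = e * A" "Der B = e * B" "Der C = e * C" for A B C e :: "rat fps fps"
    by (simp add: Der_add Der_diff Der_uminus that algebra_simps)
  ultimately show ?thesis
    unfolding Hclosed_def by blast
qed

lemma Hclosed_nth_0:
  "Hclosed s $ 0 = inverse ((1 - fps_X) ^ s) - fps_X * inverse ((1 - fps_X) ^ Suc s) - 1"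
  by (simp add: Hclosed_def fps_divide_nth_0_unit fps_power_zeroth fpsX_def fpsZ_def)

theorem proposition14:
  fixes s :: nat
  assumes "s > 0"
  shows "Hser s =
      - ((1 - fpsX * fpsZ) ^ s / (1 - fpsZ))
      - fpsX * (1 - fpsX * fpsZ) ^ (2 * s) / (1 - fpsX) ^ (s + 1)
      + (1 - fpsX * fpsZ) ^ (2 * s) / ((1 - fpsX) ^ s * (1 - fpsZ))"
proof -
  have "Hser s $ 0 = Hclosed s $ 0"
    using assms by (simp add: Hser_nth_0 Hclosed_nth_0)
  with Der_Hser Der_Hclosed have "Hser s = Hclosed s"
    by (rule Der_eigen_unique)
  then show ?thesis
    unfolding Hclosed_def .
qed

end
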